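(* Let $g\ge0$, $n\ge1$, $d\geq 1$ an integer and $S_1,\dots,S_d\subseteq\{1,\dots,n\}$. Let $Ch$ be a chamber such that $\sum_{i\in S_j}a_i<1$ for every $(a_1,\dots,a_n)\in Ch$ and every $j=1,\dots,d$. Let $\mathcal{R}=(r_1,\dots,r_n)$ be a weight datum such that $\sum_{i\in S_j}r_i=1$ for every $j=1,\dots,d$, while for every wall-indexing set $S\neq S_j$ (all $j$), $\mathcal{R}$ belongs to the half-space determined by the hyperplane $\sum_{i\in S}x_i=1$ that contains $Ch$. Then $\mathcal{G}_{g,\mathcal{A}}=\mathcal{G}_{g,\mathcal{R}}$ for every $\mathcal{A}\in Ch$.
   Context: A weight datum is $\mathcal{A}=(a_1,\dots,a_n)$ with $a_i\in\mathbb{Q}\cap(0,1]$ and $2g-2+\sum_i a_i>0$; $\mathcal{D}_{g,n}\subset\mathbb{R}^n$ is the set of weight data. For $S\subseteq\{1,\dots,n\}$ with $2\le|S|\le n$ if $g\ge1$ (resp. $2\le|S|\le n-2$ if $g=0$) (a wall-indexing set), the wall $w_S$ is the locus $\sum_{i\in S}a_i=1$ in $\mathcal{D}_{g,n}$. Chambers are the connected components of the complement in $\mathcal{D}_{g,n}$ of the union of all walls. A $(g,\mathcal{A})$-stable graph is a finite connected graph $G$ (loops and multiple edges allowed) with vertex weight $w:V(G)\to\mathbb{Z}_{\ge0}$ and $n$ legs labelled $1,\dots,n$ attached via $m:\{1,\dots,n\}\to V(G)$, with $b_1(G)+\sum_v w(v)=g$ and $2w(v)-2+|v|_E+|v|_{\mathcal{A}}>0$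 for every vertex $v$, where $|v|_E$ is the number of edge half-edges at $v$ (loops counted twice) and $|v|_{\mathcal{A}}=\sum_{m(i)=v}a_i$. $\mathcal{G}_{g,\mathcal{A}}$ is the category whose objects are $(g,\mathcal{A})$-stable graphs and whose morphisms are compositions of isomorphisms of weighted marked graphs and weighted edge contractions. *)

theory Defs
  imports "HOL-Analysis.Analysis"
begin

text \<open>Points of R^n are functions nat => real supported on {1..n}
  (product topology; this subspace is homeomorphic to R^n).\<close>

definition weight_datum :: "nat \<Rightarrow> nat \<Rightarrow> (nat \<Rightarrow> real) \<Rightarrow> bool" where
  "weight_datum g n a \<longleftrightarrow>
     (\<forall>i\<in>{1..n}. a i \<in> \<rat> \<and> 0 < a i \<and> a i \<le> 1) \<and>
     2 * real g - 2 + (\<Sum>i\<in>{1..n}. a i) > 0"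

definition Dreal :: "nat \<Rightarrow> nat \<Rightarrow> (nat \<Rightarrow> real) set" where
  "Dreal g n = {a. (\<forall>i\<in>{1..n}. 0 < a i \<and> a i \<le> 1) \<and> (\<forall>i. i \<notin> {1..n} \<longrightarrow> a i = 0) \<and>
                   2 * real g - 2 + (\<Sum>i\<in>{1..n}. a i) > 0}"

definition wall_index :: "nat \<Rightarrow> nat \<Rightarrow> nat set \<Rightarrow> bool" where
  "wall_index g n S \<longleftrightarrow> S \<subseteq> {1..n} \<and> 2 \<le> card S \<and>
     (if g = 0 then card S + 2 \<le> n else card S \<le> n)"

definition wall :: "nat \<Rightarrow> nat \<Rightarrow> nat set \<Rightarrow> (nat \<Rightarrow> real) set" where
  "wall g n S = {a \<in> Dreal g n. (\<Sum>i\<in>S. a i) = 1}"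

definition chamber :: "nat \<Rightarrow> nat \<Rightarrow> (nat \<Rightarrow> real) set \<Rightarrow> bool" where
  "chamber g n C \<longleftrightarrow>
     (let U = Dreal g n - (\<Union>S\<in>{S. wall_index g n S}. wall g n S)
      in \<exists>x\<in>U. C = connected_component_set U x)"

record sgraph =
  gV :: "nat set"
  gE :: "nat set"
  gend :: "nat \<Rightarrow> nat \<times> nat"   \<comment> \<open>endpoints of an (unoriented) edge\<close>
  gw :: "nat \<Rightarrow> nat"
  gleg :: "nat \<Rightarrow> nat"         \<comment> \<open>leg i attached at vertex gleg i\<close>

definition wf_graph :: "nat \<Rightarrow> sgraph \<Rightarrow> bool" where
  "wf_graph n G \<longleftrightarrow> finite (gV G) \<and> finite (gE G) \<and> gV G \<noteq> {} \<and>
     (\<forall>e\<in>gE G. fst (gend G e) \<in> gV G \<and> snd (gend G e) \<in> gV G) \<and>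
     (\<forall>i\<in>{1..n}. gleg G i \<in> gV G)"

definition adj :: "sgraph \<Rightarrow> (nat \<times> nat) set" where
  "adj G = {(x, y). \<exists>e\<in>gE G. gend G e = (x, y) \<or> gend G e = (y, x)}"

definition graph_connected :: "sgraph \<Rightarrow> bool" where
  "graph_connected G \<longleftrightarrow> (\<forall>u\<in>gV G. \<forall>v\<in>gV G. (u, v) \<in> (adj G)\<^sup>*)"

text \<open>Number of edge half-edges at v (loops counted twice).\<close>
definition edeg :: "sgraph \<Rightarrow> nat \<Rightarrow> nat" where
  "edeg G v = card {e \<in> gE G. fst (gend G e) = v} + card {e \<in> gE G. snd (gend G e) = v}"

definition betti1 :: "sgraph \<Rightarrow> int" where
  "betti1 G = int (card (gE G)) - int (card (gV G)) + 1"

definition legw :: "nat \<Rightarrow> (nat \<Rightarrow> real) \<Rightarrow> sgraph \<Rightarrow> nat \<Rightarrow> real" where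
  "legw n a G v = (\<Sum>i\<in>{i\<in>{1..n}. gleg G i = v}. a i)"

definition stable_graph :: "nat \<Rightarrow> nat \<Rightarrow> (nat \<Rightarrow> real) \<Rightarrow> sgraph \<Rightarrow> bool" where
  "stable_graph g n a G \<longleftrightarrow> wf_graph n G \<and> graph_connected G \<and>
     betti1 G + int (\<Sum>v\<in>gV G. gw G v) = int g \<and>
     (\<forall>v\<in>gV G. 2 * real (gw G v) - 2 + real (edeg G v) + legw n a G v > 0)"

definition graph_iso :: "nat \<Rightarrow> sgraph \<Rightarrow> sgraph \<Rightarrow> (nat \<Rightarrow> nat) \<Rightarrow> (nat \<Rightarrow> nat) \<Rightarrow> bool" where
  "graph_iso n G G' f h \<longleftrightarrow> bij_betw f (gV G) (gV G') \<and> bij_betw h (gE G) (gE G') \<and>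
     (\<forall>v\<in>gV G. gw G' (f v) = gw G v) \<and>
     (\<forall>e\<in>gE G. gend G' (h e) = (f (fst (gend G e)), f (snd (gend G e))) \<or>
                gend G' (h e) = (f (snd (gend G e)), f (fst (gend G e)))) \<and>
     (\<forall>i\<in>{1..n}. gleg G' i = f (gleg G i))"

text \<open>Weighted contraction of edge e: a loop raises the weight of its vertex by one;
  a non-loop edge (u,v) merges v into u, adding weights.\<close>
definition contract :: "sgraph \<Rightarrow> nat \<Rightarrow> sgraph" where
  "contract G e = (let (u, v) = gend G e in
     if u = v then G\<lparr>gE := gE G - {e}, gw := (gw G)(u := gw G u + 1)\<rparr>
     else (let \<sigma> = (\<lambda>x. if x = v then u else x) in
       \<lparr>gV = gV G - {v}, gE = gE G - {e}, gend = map_prod \<sigma> \<sigma> \<circ> gend G,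
        gw = (gw G)(u := gw G u + gw G v), gleg = \<sigma> \<circ> gleg G\<rparr>))"

datatype step = IsoStep sgraph sgraph "nat \<Rightarrow> nat" "nat \<Rightarrow> nat" | ContrStep sgraph nat

fun step_src :: "step \<Rightarrow> sgraph" where
  "step_src (IsoStep G G' f h) = G"
| "step_src (ContrStep G e) = G"

fun step_tgt :: "step \<Rightarrow> sgraph" where
  "step_tgt (IsoStep G G' f h) = G'"
| "step_tgt (ContrStep G e) = contract G e"

fun valid_step :: "nat \<Rightarrow> nat \<Rightarrow> (nat \<Rightarrow> real) \<Rightarrow> step \<Rightarrow> bool" where
  "valid_step g n a (IsoStep G G' f h) \<longleftrightarrow>
     stable_graph g n a G \<and> stable_graph g n a G' \<and> graph_iso n G G' f h"
| "valid_step g n a (ContrStep G e) \<longleftrightarrow>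
     stable_graph g n a G \<and> e \<in> gE G \<and> stable_graph g n a (contract G e)"

fun step_chain :: "sgraph \<Rightarrow> step list \<Rightarrow> sgraph \<Rightarrow> bool" where
  "step_chain G [] G' \<longleftrightarrow> G = G'"
| "step_chain G (s # ss) G' \<longleftrightarrow> step_src s = G \<and> step_chain (step_tgt s) ss G'"

text \<open>The category G_{g,A}: objects = (g,A)-stable graphs; morphisms = composites
  (source, word of elementary isomorphisms/contractions inside the category, target).\<close>
definition Gcat :: "nat \<Rightarrow> nat \<Rightarrow> (nat \<Rightarrow> real) \<Rightarrow>
    sgraph set \<times> (sgraph \<times> step list \<times> sgraph) set" where
  "Gcat g n a = ({G. stable_graph g n a G},
     {(G, ss, G'). stable_graph g n a G \<and> step_chain G ss G' \<and> (\<forall>s\<in>set ss. valid_step g n a s)})"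

end

theory Submission
  imports Defs
begin

(* Stability of a vertex depends on the weights only through which sets of legs weigh more
   than 1: a vertex with 2w - 2 + |v|_E >= 1 is always stable, one with 2w - 2 + |v|_E = 0
   needs a leg (weights are positive), a weight-0 vertex with one edge needs its legs to weigh
   more than 1, and an edgeless vertex is the whole graph, where g = 0 and stability is the
   global condition 2g - 2 + |A| > 0.  For a set of legs that indexes no wall, "weight > 1" is
   decided by its cardinality alone.  On a wall w_S with S distinct from the S_j, the chamber
   is connected and misses the wall, so it lies on one side, and R lies on that side by
   hypothesis; on the walls w_{S_j} neither A nor R has weight > 1.  So A and R have the same
   stable graphs, hence the same categories. *)

definition real_weight_datum :: "nat \<Rightarrow> nat \<Rightarrow> (nat \<Rightarrow> real) \<Rightarrow> bool" where
  "real_weight_datum g n a \<longleftrightarrow>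
     (\<forall>i\<in>{1..n}. 0 < a i \<and> a i \<le> 1) \<and> 2 * real g - 2 + (\<Sum>i\<in>{1..n}. a i) > 0"

lemma weight_datum_imp_real_weight_datum:
  "weight_datum g n a \<Longrightarrow> real_weight_datum g n a"
  unfolding weight_datum_def real_weight_datum_def by blast

lemma real_weight_datum_sum_le_card:
  assumes "real_weight_datum g n a" "T \<subseteq> {1..n}"
  shows "sum a T \<le> real (card T)"
proof -
  have "sum a T \<le> sum (\<lambda>_. 1) T"
    by (rule sum_mono) (use assms in \<open>auto simp: real_weight_datum_def\<close>)
  then show ?thesis by simp
qed

lemma real_weight_datum_sum_nonneg:
  assumes "real_weight_datum g n a" "T \<subseteq> {1..n}"
  shows "0 \<le> sum a T"
  using assms by (intro sum_nonneg) (auto simp: real_weight_datum_def less_imp_le)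

lemma real_weight_datum_sum_pos:
  assumes "real_weight_datum g n a" "T \<subseteq> {1..n}" "T \<noteq> {}"
  shows "0 < sum a T"
proof (rule sum_pos)
  show "finite T" using assms(2) finite_subset by blast
qed (use assms in \<open>auto simp: real_weight_datum_def\<close>)

lemma real_weight_datum_non_wall_index_sum_gt_1_iff:
  assumes a: "real_weight_datum g n a" and T: "T \<subseteq> {1..n}" and "\<not> wall_index g n T"
  shows "1 < sum a T \<longleftrightarrow> 2 \<le> card T"
proof (cases "2 \<le> card T")
  case False
  then show ?thesis using real_weight_datum_sum_le_card[OF a T] by simp
next
  case True
  have "card T \<le> n" using card_mono[OF _ T] by simp
  with True \<open>\<not> wall_index g n T\<close> T have g: "g = 0" and small: "n < card T + 2"
    unfolding wall_index_def by (auto split: if_splits)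
  define C where "C = {1..n} - T"
  have "card C \<le> 1"
    using small card_Diff_subset[OF finite_subset[OF T] T] unfolding C_def by simp
  then have "sum a C \<le> 1"
    using real_weight_datum_sum_le_card[OF a, of C] unfolding C_def by force
  moreover have "sum a {1..n} = sum a T + sum a C"
    unfolding C_def using sum.subset_diff[OF T] by (simp add: add.commute)
  ultimately show ?thesis using a g True unfolding real_weight_datum_def by simp
qed

lemma connected_edeg_zero_imp_singleton:
  assumes wf: "wf_graph n G" and con: "graph_connected G" and v: "v \<in> gV G"
    and "edeg G v = 0"
  shows "gV G = {v}" "gE G = {}"
proof -
  have "finite (gE G)" using wf unfolding wf_graph_def by simp
  with \<open>edeg G v = 0\<close> have off_v: "fst (gend G e) \<noteq> v" "snd (gend G e) \<noteq> v" if "e \<in> gE G" for e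
    using that unfolding edeg_def by auto
  show V: "gV G = {v}"
  proof (rule ccontr)
    assume "gV G \<noteq> {v}"
    then obtain u where "u \<in> gV G" "u \<noteq> v" using v by auto
    then have "(v, u) \<in> (adj G)\<^sup>*" "v \<noteq> u" using con v unfolding graph_connected_def by auto
    then obtain y where "(v, y) \<in> adj G" by (metis converse_rtranclE)
    then show False using off_v unfolding adj_def by force
  qed
  show "gE G = {}"
    using wf off_v unfolding wf_graph_def V by fastforce
qed

lemma stable_vertex_cong:
  assumes A: "real_weight_datum g n A" and R: "real_weight_datum g n R"
    and heavy: "\<forall>T\<subseteq>{1..n}. 1 < sum A T \<longleftrightarrow> 1 < sum R T"
    and wf: "wf_graph n G" and con: "graph_connected G"
    and genus: "betti1 G + int (\<Sum>v\<in>gV G. gw G v) = int g" and v: "v \<in> gV G"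
  shows "2 * real (gw G v) - 2 + real (edeg G v) + legw n A G v > 0 \<longleftrightarrow>
         2 * real (gw G v) - 2 + real (edeg G v) + legw n R G v > 0"
proof -
  define T where "T = {i\<in>{1..n}. gleg G i = v}"
  have T: "T \<subseteq> {1..n}" unfolding T_def by auto
  have legw: "legw n a G v = sum a T" for a
    unfolding legw_def T_def ..
  consider "3 \<le> 2 * gw G v + edeg G v" | "2 * gw G v + edeg G v = 2"
    | "gw G v = 0" "edeg G v = 1" | "gw G v = 0" "edeg G v = 0"
    by linarith
  then show ?thesis
  proof cases
    case 1
    then show ?thesis
      using real_weight_datum_sum_nonneg[OF A T] real_weight_datum_sum_nonneg[OF R T]
      by (simp add: legw)
  next
    case 2
    then show ?thesis
      using real_weight_datum_sum_pos[OF A T] real_weight_datum_sum_pos[OF R T]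
      by (cases "T = {}") (simp_all add: legw)
  next
    case 3
    then show ?thesis using heavy T by (simp add: legw)
  next
    case 4
    note single = connected_edeg_zero_imp_singleton[OF wf con v \<open>edeg G v = 0\<close>]
    then have "g = 0" using genus 4 unfolding betti1_def by simp
    moreover have "T = {1..n}"
      using wf single unfolding wf_graph_def T_def by blast
    ultimately show ?thesis
      using 4 A R unfolding real_weight_datum_def by (simp add: legw)
  qed
qed

lemma stable_graph_cong:
  assumes "real_weight_datum g n A" "real_weight_datum g n R"
    and "\<forall>T\<subseteq>{1..n}. 1 < sum A T \<longleftrightarrow> 1 < sum R T"
  shows "stable_graph g n A G \<longleftrightarrow> stable_graph g n R G"
  unfolding stable_graph_def using stable_vertex_cong[OF assms] by blast

lemma Gcat_cong:
  assumes "\<And>G. stable_graph g n A G \<longleftrightarrow> stable_graph g n R G"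
  shows "Gcat g n A = Gcat g n R"
proof -
  have "valid_step g n A s \<longleftrightarrow> valid_step g n R s" for s
    by (cases s) (simp_all add: assms)
  then have "valid_step g n A = valid_step g n R" "stable_graph g n A = stable_graph g n R"
    using assms by auto
  then show ?thesis
    unfolding Gcat_def by simp
qed

lemma chamber_one_side_of_wall:
  assumes "chamber g n C" and "wall_index g n S"
  shows "(\<forall>a\<in>C. (\<Sum>i\<in>S. a i) < 1) \<or> (\<forall>a\<in>C. (\<Sum>i\<in>S. a i) > 1)"
proof -
  define U where "U = Dreal g n - (\<Union>S\<in>{S. wall_index g n S}. wall g n S)"
  define f where "f = (\<lambda>a::nat \<Rightarrow> real. \<Sum>i\<in>S. a i)"
  obtain x where "C = connected_component_set U x"
    using assms(1) unfolding chamber_def U_def Let_def by blast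
  then have "C \<subseteq> U" "connected C"
    using connected_component_subset connected_connected_component by auto
  then have off_wall: "f a \<noteq> 1" if "a \<in> C" for a
    using that assms(2) unfolding U_def wall_def f_def by blast
  have "continuous_on UNIV f"
    unfolding f_def by (intro continuous_intros continuous_on_product_coordinates)
  then have "continuous_on C f"
    using continuous_on_subset by blast
  then have "connected (f ` C)"
    using connected_continuous_image \<open>connected C\<close> by blast
  then have "\<not> (a \<in> C \<and> b \<in> C \<and> f b < 1 \<and> 1 < f a)" for a b
    using connectedD_interval[of "f ` C" "f b" "f a" 1] off_wall by fastforce
  then show ?thesis
    using off_wall unfolding f_def by (meson linorder_neqE_linordered_idom)
qed

theorem mainTheorem3:
  fixes g n d :: nat and Sf :: "nat \<Rightarrow> nat set"
    and Ch :: "(nat \<Rightarrow> real) set" and R :: "nat \<Rightarrow> real"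
  assumes "n \<ge> 1" and "d \<ge> 1"
    and "\<forall>j\<in>{1..d}. Sf j \<subseteq> {1..n}"
    and "chamber g n Ch"
    and "\<forall>a\<in>Ch. \<forall>j\<in>{1..d}. (\<Sum>i\<in>Sf j. a i) < 1"
    and "weight_datum g n R"
    and "\<forall>j\<in>{1..d}. (\<Sum>i\<in>Sf j. R i) = 1"
    and "\<forall>S. wall_index g n S \<and> S \<notin> Sf ` {1..d} \<longrightarrow>
           ((\<forall>a\<in>Ch. (\<Sum>i\<in>S. a i) < 1) \<longrightarrow> (\<Sum>i\<in>S. R i) < 1) \<and>
           ((\<forall>a\<in>Ch. (\<Sum>i\<in>S. a i) > 1) \<longrightarrow> (\<Sum>i\<in>S. R i) > 1)"
  shows "\<forall>A\<in>Ch. weight_datum g n A \<longrightarrow> Gcat g n A = Gcat g n R"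
proof (intro ballI impI)
  fix A assume "A \<in> Ch" "weight_datum g n A"
  have A: "real_weight_datum g n A" and R: "real_weight_datum g n R"
    using \<open>weight_datum g n A\<close> assms(6) by (simp_all add: weight_datum_imp_real_weight_datum)
  have "1 < sum A T \<longleftrightarrow> 1 < sum R T" if T: "T \<subseteq> {1..n}" for T
  proof -
    consider "\<not> wall_index g n T" | "T \<in> Sf ` {1..d}" | "wall_index g n T" "T \<notin> Sf ` {1..d}"
      by blast
    then show ?thesis
    proof cases
      case 1
      then show ?thesis using real_weight_datum_non_wall_index_sum_gt_1_iff[OF _ T] A R by blast
    next
      case 2
      then show ?thesis using assms(5,7) \<open>A \<in> Ch\<close> by fastforce
    next
      case 3
      then show ?thesis
        using chamber_one_side_of_wall[OF assms(4) \<open>wall_index g n T\<close>] assms(8) \<open>A \<in> Ch\<close>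
        by fastforce
    qed
  qed
  then show "Gcat g n A = Gcat g n R"
    using Gcat_cong stable_graph_cong[OF A R] by blast
qed

end
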